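(* Let $\mathcal{U}$ be a finite set of users, each associated with a base station $b_u$, where each base station $b$ has a finite set of integer-indexed subchannels $\mathcal{C}_b$, and assume the number of users associated with each base station $b$ is at most $|\mathcal{C}_b|$. Some users are "ongoing", each having a previously used subchannel $\bar c_u\in\mathcal{C}_{b_u}$, where ongoing users associated with the same base station have pairwise distinct previous subchannels. For each $u$ let $\mathcal{C}^t_u=\{\bar c_u\}$ if $u$ is ongoing and $\mathcal{C}^t_u=\mathcal{C}_{b_u}$ otherwise. Call two distinct users $u,u'$ conflicting if $b_u=b_{u'}$, or if both are ongoing with $\bar c_u\neq\bar c_{u'}$. Let $i^t_{u,u'}$ satisfy $i^t_{u,u}=0$, $i^t_{u,u'}=+\infty$ for conflicting pairs, and $i^t_{u,u'}\in[0,\infty)$ otherwise. Then every optimal solution of (P3): minimize over $\boldsymbol{c}^t$ with $c^t_u\in\mathcal{C}^t_u$ the objective $\frac12\sum_{u,u'\in\mathcal{U}}\max\{0,1-|c^t_u-c^t_{u'}|\}\, i^t_{u,u'}$ (with $0\cdot\infty=0$), is a solution of the subchannel allocation problem: it assigns pairwise different subchannels to users of the same base station, keeps each ongoing user on its previous subchannel, and among all assignments satisfying these requirements it minimizes the total co-channel interference $\frac12\sum_{u,u':\,c_u=c_{u'}} i^t_{u,u'}$.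
   Context: The subchannel allocation problem: assign to each associated user a subchannel of its base station so that users of the same base station use distinct subchannels, ongoing users keep their previous subchannels, and the total pairwise interference among users sharing a subchannel is minimized. *)

theory Defs
  imports "HOL-Library.Extended_Nonnegative_Real"
begin

text \<open>Users of type 'u, base stations of type 'b. bs u is the base station of user u,
  C b the (integer-indexed) subchannels of base station b, Og the ongoing users,
  cbar u the previous subchannel of ongoing user u.\<close>

definition Ct :: "('u \<Rightarrow> 'b) \<Rightarrow> ('b \<Rightarrow> int set) \<Rightarrow> 'u set \<Rightarrow> ('u \<Rightarrow> int) \<Rightarrow> 'u \<Rightarrow> int set" where
  "Ct bs C Og cbar u = (if u \<in> Og then {cbar u} else C (bs u))"

definition conflicting :: "('u \<Rightarrow> 'b) \<Rightarrow> 'u set \<Rightarrow> ('u \<Rightarrow> int) \<Rightarrow> 'u \<Rightarrow> 'u \<Rightarrow> bool" where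
  "conflicting bs Og cbar u u' \<longleftrightarrow> u \<noteq> u' \<and>
     (bs u = bs u' \<or> (u \<in> Og \<and> u' \<in> Og \<and> cbar u \<noteq> cbar u'))"

text \<open>Objective of (P3); multiplication in ennreal satisfies 0 * \<infinity> = 0.\<close>
definition P3_obj :: "'u set \<Rightarrow> ('u \<Rightarrow> 'u \<Rightarrow> ennreal) \<Rightarrow> ('u \<Rightarrow> int) \<Rightarrow> ennreal" where
  "P3_obj U i c = (1/2) * (\<Sum>u\<in>U. \<Sum>u'\<in>U.
      ennreal (max 0 (1 - \<bar>real_of_int (c u - c u')\<bar>)) * i u u')"

definition P3_optimal :: "('u \<Rightarrow> 'b) \<Rightarrow> ('b \<Rightarrow> int set) \<Rightarrow> 'u set \<Rightarrow> 'u set \<Rightarrow> ('u \<Rightarrow> int)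
    \<Rightarrow> ('u \<Rightarrow> 'u \<Rightarrow> ennreal) \<Rightarrow> ('u \<Rightarrow> int) \<Rightarrow> bool" where
  "P3_optimal bs C U Og cbar i c \<longleftrightarrow>
     (\<forall>u\<in>U. c u \<in> Ct bs C Og cbar u) \<and>
     (\<forall>c'. (\<forall>u\<in>U. c' u \<in> Ct bs C Og cbar u) \<longrightarrow> P3_obj U i c \<le> P3_obj U i c')"

definition valid_alloc :: "('u \<Rightarrow> 'b) \<Rightarrow> ('b \<Rightarrow> int set) \<Rightarrow> 'u set \<Rightarrow> 'u set \<Rightarrow> ('u \<Rightarrow> int)
    \<Rightarrow> ('u \<Rightarrow> int) \<Rightarrow> bool" where
  "valid_alloc bs C U Og cbar c \<longleftrightarrow>
     (\<forall>u\<in>U. c u \<in> C (bs u)) \<and>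
     (\<forall>u\<in>U. \<forall>u'\<in>U. u \<noteq> u' \<and> bs u = bs u' \<longrightarrow> c u \<noteq> c u') \<and>
     (\<forall>u\<in>Og. c u = cbar u)"

definition cochannel_interf :: "'u set \<Rightarrow> ('u \<Rightarrow> 'u \<Rightarrow> ennreal) \<Rightarrow> ('u \<Rightarrow> int) \<Rightarrow> ennreal" where
  "cochannel_interf U i c = (1/2) * (\<Sum>(u,u')\<in>{(u,u'). u \<in> U \<and> u' \<in> U \<and> c u = c u'}. i u u')"

end

theory Submission
  imports Defs
begin

text \<open>On integer channels the weight \<open>max 0 (1 - \<bar>c u - c u'\<bar>)\<close> is the indicator of
  \<open>c u = c u'\<close>, so the objective of (P3) is the co-channel interference itself. An infinite
  weight is paid exactly when two conflicting users share a subchannel, so among the assignments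
  allowed by (P3) the valid allocations are precisely those of finite cost. A valid allocation
  exists, since each base station has enough subchannels left over by its ongoing users for its
  new users; hence an optimum of (P3) has finite cost, is valid, and minimises the interference.\<close>

lemma max_0_one_minus_abs_of_int_diff:
  "max 0 (1 - \<bar>real_of_int (a - b)\<bar>) = (if a = b then 1 else 0)"
proof (cases "a = b")
  case False
  then have "\<bar>real_of_int (a - b)\<bar> \<ge> 1" by linarith
  with False show ?thesis by simp
qed simp

lemma P3_obj_eq_cochannel_interf:
  assumes "finite U"
  shows "P3_obj U i c = cochannel_interf U i c"
proof -
  have "(\<Sum>u\<in>U. \<Sum>u'\<in>U. ennreal (max 0 (1 - \<bar>real_of_int (c u - c u')\<bar>)) * i u u')
      = (\<Sum>(u,u')\<in>U \<times> U. if c u = c u' then i u u' else 0)"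
    by (simp only: max_0_one_minus_abs_of_int_diff sum.cartesian_product) (auto intro: sum.cong)
  also have "\<dots> = (\<Sum>(u,u')\<in>{(u,u'). u \<in> U \<and> u' \<in> U \<and> c u = c u'}. i u u')"
    using assms by (simp add: sum.inter_filter [symmetric] case_prod_unfold) (metis mem_Times_iff)
  finally show ?thesis
    unfolding P3_obj_def cochannel_interf_def by simp
qed

lemma cochannel_interf_eq_top_iff:
  assumes "finite U"
  shows "cochannel_interf U i c = top \<longleftrightarrow> (\<exists>u\<in>U. \<exists>u'\<in>U. c u = c u' \<and> i u u' = top)"
proof -
  have "finite {(u,u'). u \<in> U \<and> u' \<in> U \<and> c u = c u'}"
    by (rule finite_subset [of _ "U \<times> U"]) (auto simp: assms)
  then show ?thesis
    unfolding cochannel_interf_def by (auto simp: ennreal_mult_eq_top_iff ennreal_divide_eq_top_iff)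
qed

lemma inj_on_extend_into:
  assumes "finite A" "finite B" "card A \<le> card B"
    and "X \<subseteq> A" "inj_on g X" "g ` X \<subseteq> B"
  shows "\<exists>f. inj_on f A \<and> f ` A \<subseteq> B \<and> (\<forall>x\<in>X. f x = g x)"
proof -
  have "finite X" using assms(1,4) by (rule finite_subset [rotated])
  then have "card (A - X) = card A - card X"
    using assms(4) by (simp add: card_Diff_subset)
  also have "\<dots> \<le> card B - card (g ` X)"
    using assms(3,5) by (simp add: card_image)
  also have "\<dots> = card (B - g ` X)"
    using \<open>finite X\<close> assms(6) by (simp add: card_Diff_subset)
  finally obtain h where h: "h ` (A - X) \<subseteq> B - g ` X" "inj_on h (A - X)"
    using card_le_inj assms(1,2) by (metis finite_Diff)
  define f where "f x = (if x \<in> X then g x else h x)" for x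
  have "inj_on f A"
  proof (rule inj_onI)
    fix x y assume "x \<in> A" "y \<in> A" "f x = f y"
    then show "x = y"
      using h assms(5) unfolding f_def inj_on_def by (auto split: if_splits)
  qed
  moreover have "f ` A \<subseteq> B"
    using h assms(6) unfolding f_def by auto
  moreover have "\<forall>x\<in>X. f x = g x"
    by (simp add: f_def)
  ultimately show ?thesis by blast
qed

lemma valid_alloc_exists:
  assumes "finite U" "\<And>b. finite (C b)" "\<And>b. card {u \<in> U. bs u = b} \<le> card (C b)"
    and "Og \<subseteq> U" "\<And>u. u \<in> Og \<Longrightarrow> cbar u \<in> C (bs u)"
    and "\<And>u u'. u \<in> Og \<Longrightarrow> u' \<in> Og \<Longrightarrow> u \<noteq> u' \<Longrightarrow> bs u = bs u' \<Longrightarrow> cbar u \<noteq> cbar u'"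
  shows "\<exists>c. valid_alloc bs C U Og cbar c"
proof -
  have "\<forall>b. \<exists>f. inj_on f {u \<in> U. bs u = b} \<and> f ` {u \<in> U. bs u = b} \<subseteq> C b
      \<and> (\<forall>u\<in>{u \<in> Og. bs u = b}. f u = cbar u)"
  proof
    fix b
    have "inj_on cbar {u \<in> Og. bs u = b}"
    proof (rule inj_onI)
      fix u u' assume "u \<in> {u \<in> Og. bs u = b}" "u' \<in> {u \<in> Og. bs u = b}" "cbar u = cbar u'"
      then show "u = u'" using assms(6) [of u u'] by auto
    qed
    then show "\<exists>f. inj_on f {u \<in> U. bs u = b} \<and> f ` {u \<in> U. bs u = b} \<subseteq> C b
      \<and> (\<forall>u\<in>{u \<in> Og. bs u = b}. f u = cbar u)"
      using assms(1-5) by (intro inj_on_extend_into) auto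
  qed
  from choice [OF this] obtain F where F: "\<forall>b. inj_on (F b) {u \<in> U. bs u = b}
      \<and> F b ` {u \<in> U. bs u = b} \<subseteq> C b \<and> (\<forall>u\<in>{u \<in> Og. bs u = b}. F b u = cbar u)" ..
  have "valid_alloc bs C U Og cbar (\<lambda>u. F (bs u) u)"
    unfolding valid_alloc_def
  proof (intro conjI ballI impI)
    fix u assume "u \<in> U"
    then show "F (bs u) u \<in> C (bs u)" using F by blast
  next
    fix u u' assume "u \<in> U" "u' \<in> U" "u \<noteq> u' \<and> bs u = bs u'"
    then show "F (bs u) u \<noteq> F (bs u') u'" using F by (metis (mono_tags, lifting) inj_onD mem_Collect_eq)
  next
    fix u assume "u \<in> Og"
    then show "F (bs u) u = cbar u" using F by blast
  qed
  then show ?thesis by blast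
qed

lemma valid_alloc_imp_Ct:
  assumes "valid_alloc bs C U Og cbar c" "u \<in> U"
  shows "c u \<in> Ct bs C Og cbar u"
  using assms unfolding valid_alloc_def Ct_def by auto

lemma valid_alloc_cochannel_interf_finite:
  assumes "finite U" "valid_alloc bs C U Og cbar c"
    and "\<And>u. u \<in> U \<Longrightarrow> i u u = 0"
    and "\<And>u u'. u \<in> U \<Longrightarrow> u' \<in> U \<Longrightarrow> u \<noteq> u' \<Longrightarrow> \<not> conflicting bs Og cbar u u' \<Longrightarrow> i u u' < \<infinity>"
  shows "cochannel_interf U i c < \<infinity>"
proof -
  have "i u u' \<noteq> \<infinity>" if "u \<in> U" "u' \<in> U" "c u = c u'" for u u'
  proof (cases "u = u'")
    case True
    with assms(3) that show ?thesis by simp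
  next
    case False
    with assms(2) that have "\<not> conflicting bs Og cbar u u'"
      unfolding valid_alloc_def conflicting_def by metis
    with assms(4) False that show ?thesis by fastforce
  qed
  then show ?thesis
    by (simp add: less_top [symmetric] cochannel_interf_eq_top_iff [OF assms(1)])
qed

lemma Ct_cochannel_interf_finite_imp_valid_alloc:
  assumes "finite U" "Og \<subseteq> U" "\<And>u. u \<in> Og \<Longrightarrow> cbar u \<in> C (bs u)"
    and "\<And>u u'. u \<in> U \<Longrightarrow> u' \<in> U \<Longrightarrow> conflicting bs Og cbar u u' \<Longrightarrow> i u u' = \<infinity>"
    and "\<forall>u\<in>U. c u \<in> Ct bs C Og cbar u" "cochannel_interf U i c < \<infinity>"
  shows "valid_alloc bs C U Og cbar c"
proof -
  have "c u \<noteq> c u'" if "u \<in> U" "u' \<in> U" "u \<noteq> u'" "bs u = bs u'" for u u'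
  proof
    assume "c u = c u'"
    moreover have "i u u' = \<infinity>"
      using assms(4) that unfolding conflicting_def by blast
    ultimately have "cochannel_interf U i c = \<infinity>"
      using that by (auto simp: cochannel_interf_eq_top_iff [OF assms(1)])
    with assms(6) show False by simp
  qed
  then show ?thesis
    using assms(2,3,5) unfolding valid_alloc_def Ct_def by (auto split: if_splits)
qed

theorem proposition2:
  fixes U :: "'u set" and bs :: "'u \<Rightarrow> 'b" and C :: "'b \<Rightarrow> int set"
    and Og :: "'u set" and cbar :: "'u \<Rightarrow> int"
    and i :: "'u \<Rightarrow> 'u \<Rightarrow> ennreal" and c :: "'u \<Rightarrow> int"
  assumes finU: "finite U"
    and finC: "\<And>b. finite (C b)"
    and load: "\<And>b. card {u \<in> U. bs u = b} \<le> card (C b)"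
    and OU: "Og \<subseteq> U"
    and cbar_in: "\<And>u. u \<in> Og \<Longrightarrow> cbar u \<in> C (bs u)"
    and cbar_dist: "\<And>u u'. u \<in> Og \<Longrightarrow> u' \<in> Og \<Longrightarrow> u \<noteq> u' \<Longrightarrow> bs u = bs u' \<Longrightarrow> cbar u \<noteq> cbar u'"
    and i_diag: "\<And>u. u \<in> U \<Longrightarrow> i u u = 0"
    and i_conf: "\<And>u u'. u \<in> U \<Longrightarrow> u' \<in> U \<Longrightarrow> conflicting bs Og cbar u u' \<Longrightarrow> i u u' = \<infinity>"
    and i_fin: "\<And>u u'. u \<in> U \<Longrightarrow> u' \<in> U \<Longrightarrow> u \<noteq> u' \<Longrightarrow> \<not> conflicting bs Og cbar u u' \<Longrightarrow> i u u' < \<infinity>"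
    and opt: "P3_optimal bs C U Og cbar i c"
  shows "valid_alloc bs C U Og cbar c \<and>
         (\<forall>c'. valid_alloc bs C U Og cbar c' \<longrightarrow> cochannel_interf U i c \<le> cochannel_interf U i c')"
proof -
  from opt have c_Ct: "\<forall>u\<in>U. c u \<in> Ct bs C Og cbar u"
    and c_le: "\<And>c'. \<forall>u\<in>U. c' u \<in> Ct bs C Og cbar u \<Longrightarrow> P3_obj U i c \<le> P3_obj U i c'"
    unfolding P3_optimal_def by auto
  have c_min: "cochannel_interf U i c \<le> cochannel_interf U i c'"
    if "valid_alloc bs C U Og cbar c'" for c'
    using c_le [of c'] valid_alloc_imp_Ct [OF that] by (simp add: P3_obj_eq_cochannel_interf [OF finU])
  obtain c0 where c0: "valid_alloc bs C U Og cbar c0"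
    using valid_alloc_exists [OF finU finC load OU cbar_in cbar_dist] by blast
  have c_finite: "cochannel_interf U i c < \<infinity>"
    using c_min [OF c0] valid_alloc_cochannel_interf_finite [OF finU c0 i_diag i_fin]
    by (rule le_less_trans)
  have c_valid: "valid_alloc bs C U Og cbar c"
    using finU OU cbar_in i_conf c_Ct c_finite by (rule Ct_cochannel_interf_finite_imp_valid_alloc)
  from c_valid c_min show ?thesis by blast
qed

end
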